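(* For every partial trace $T$ of iTML, the set $\mathrm{Prefix}(T) = \{T' \mid T' \sqsubseteq T\}$, ordered by $\sqsubseteq$, is a complete lattice.
   Context: Partial expressions $e$ of iTML are built from $x \mid () \mid \mathsf{inl}\,e \mid \mathsf{inr}\,e \mid (e_1,e_2) \mid \mathsf{fst}\,e \mid \mathsf{snd}\,e \mid \mathsf{fun}\,f(x).M \mid \Box$ (with $M$ partial computations, $\Box$ a hole), ordered by the least order $\sqsubseteq$ with $\Box\sqsubseteq t$ that is closed under constructors componentwise. Outcomes $k ::= \mathsf{val} \mid \mathsf{exn}$; $\ell$ ranges over store locations and $\mathcal{L}$ over finite sets of locations. Partial traces: $T ::= \mathsf{return}\,e \mid \mathsf{let_F}(T) \mid \mathsf{let_S}(T_1, x.T_2) \mid \mathsf{app}(e_1,e_2,f.x.T) \mid \mathsf{caseL}(e,x.T,y) \mid \mathsf{caseR}(e,x,y.T) \mid \mathsf{raise}\,e \mid \mathsf{try_S}(T) \mid \mathsf{try_F}(T_1,x.T_2) \mid \mathsf{ref}_\ell\,e \mid e_1 :=_\ell e_2 \mid !_\ell\,e \mid \Box^{k}_{\mathcal{L}}$. The set $\mathsf{writes}(T)$: $\mathsf{writes}(\Box^k_{\mathcal{L}})=\mathcal{L}$; $\emptyset$ for $\mathsf{return}\,e$, $\mathsf{raise}\,e$ and $!_\ell\,e$; $\{\ell\}$ for $\mathsf{ref}_\ell\,e$ and $e_1:=_\ell e_2$; $\mathsf{writes}(T_1)\cup\mathsf{writes}(T_2)$ for $\mathsf{let_S}(T_1,x.T_2)$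 and $\mathsf{try_F}(T_1,x.T_2)$; $\mathsf{writes}(T)$ for $\mathsf{let_F}(T)$, $\mathsf{try_S}(T)$, $\mathsf{app}(e_1,e_2,f.x.T)$, $\mathsf{caseL}(e,x.T,y)$, $\mathsf{caseR}(e,x,y.T)$. The outcome $\mathsf{outcome}(T)$: $k$ for $\Box^k_{\mathcal{L}}$; $\mathsf{val}$ for $\mathsf{return}\,e$, $\mathsf{try_S}(T)$, $\mathsf{ref}_\ell\,e$, $e_1:=_\ell e_2$, $!_\ell\,e$; $\mathsf{exn}$ for $\mathsf{let_F}(T)$ and $\mathsf{raise}\,e$; $\mathsf{outcome}(T_2)$ for $\mathsf{let_S}(T_1,x.T_2)$ and $\mathsf{try_F}(T_1,x.T_2)$; $\mathsf{outcome}(T)$ for $\mathsf{app}(\ldots,T)$, $\mathsf{caseL}(e,x.T,y)$, $\mathsf{caseR}(e,x,y.T)$. The order $\sqsubseteq$ on traces is the least relation containing $\Box^{k}_{\mathcal{L}} \sqsubseteq T$ whenever $\mathsf{writes}(T)=\mathcal{L}$ and $\mathsf{outcome}(T)=k$, and closed under each trace constructor componentwise (with expression components compared by $\sqsubseteq$ on expressions and the labels $\ell$, $x,y,f$ identical), e.g. $\mathsf{let_S}(T_1,x.T_2)\sqsubseteq\mathsf{let_S}(T_1',x.T_2')$ iff $T_i\sqsubseteq T_i'$, and $e_1 :=_\ell e_2 \sqsubseteq e_1' :=_\ell e_2'$ iff $e_i\sqsubseteq e_i'$. There is no universal least trace. *)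

theory Defs
  imports "HOL-Algebra.Complete_Lattice" "HOL-Library.FSet"
begin

type_synonym var = string
type_synonym loc = nat

datatype outcome = Val | Exn

datatype expr =
    EVar var
  | EUnit
  | EInl expr
  | EInr expr
  | EPair expr expr
  | EFst expr
  | ESnd expr
  | EFun var var comp          (* fun f(x). M *)
  | EHole
and comp =
    CReturn expr
  | CLet var comp comp
  | CApp expr expr
  | CCase expr var comp var comp
  | CRaise expr
  | CTry comp var comp
  | CRef expr
  | CAssign expr expr
  | CDeref expr
  | CHole

inductive expr_le :: "expr \<Rightarrow> expr \<Rightarrow> bool"
  and comp_le :: "comp \<Rightarrow> comp \<Rightarrow> bool" where
  "expr_le EHole e"
| "expr_le (EVar x) (EVar x)"
| "expr_le EUnit EUnit"
| "expr_le e e' \<Longrightarrow> expr_le (EInl e) (EInl e')"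
| "expr_le e e' \<Longrightarrow> expr_le (EInr e) (EInr e')"
| "expr_le e1 e1' \<Longrightarrow> expr_le e2 e2' \<Longrightarrow> expr_le (EPair e1 e2) (EPair e1' e2')"
| "expr_le e e' \<Longrightarrow> expr_le (EFst e) (EFst e')"
| "expr_le e e' \<Longrightarrow> expr_le (ESnd e) (ESnd e')"
| "comp_le M M' \<Longrightarrow> expr_le (EFun f x M) (EFun f x M')"
| "comp_le CHole M"
| "expr_le e e' \<Longrightarrow> comp_le (CReturn e) (CReturn e')"
| "comp_le M1 M1' \<Longrightarrow> comp_le M2 M2' \<Longrightarrow> comp_le (CLet x M1 M2) (CLet x M1' M2')"
| "expr_le e1 e1' \<Longrightarrow> expr_le e2 e2' \<Longrightarrow> comp_le (CApp e1 e2) (CApp e1' e2')"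
| "expr_le e e' \<Longrightarrow> comp_le M1 M1' \<Longrightarrow> comp_le M2 M2' \<Longrightarrow>
     comp_le (CCase e x M1 y M2) (CCase e' x M1' y M2')"
| "expr_le e e' \<Longrightarrow> comp_le (CRaise e) (CRaise e')"
| "comp_le M1 M1' \<Longrightarrow> comp_le M2 M2' \<Longrightarrow> comp_le (CTry M1 x M2) (CTry M1' x M2')"
| "expr_le e e' \<Longrightarrow> comp_le (CRef e) (CRef e')"
| "expr_le e1 e1' \<Longrightarrow> expr_le e2 e2' \<Longrightarrow> comp_le (CAssign e1 e2) (CAssign e1' e2')"
| "expr_le e e' \<Longrightarrow> comp_le (CDeref e) (CDeref e')"

datatype trace =
    TReturn expr
  | TLetF trace
  | TLetS trace var trace
  | TApp expr expr var var trace          (* app(e1, e2, f.x.T) *)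
  | TCaseL expr var trace var             (* caseL(e, x.T, y) *)
  | TCaseR expr var var trace             (* caseR(e, x, y.T) *)
  | TRaise expr
  | TTryS trace
  | TTryF trace var trace
  | TRef loc expr
  | TAssign expr loc expr
  | TDeref loc expr
  | THole outcome "loc fset"

fun writes :: "trace \<Rightarrow> loc fset" where
  "writes (THole k L) = L"
| "writes (TReturn e) = {||}"
| "writes (TRaise e) = {||}"
| "writes (TDeref l e) = {||}"
| "writes (TRef l e) = {|l|}"
| "writes (TAssign e1 l e2) = {|l|}"
| "writes (TLetS T1 x T2) = writes T1 |\<union>| writes T2"
| "writes (TTryF T1 x T2) = writes T1 |\<union>| writes T2"
| "writes (TLetF T) = writes T"
| "writes (TTryS T) = writes T"
| "writes (TApp e1 e2 f x T) = writes T"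
| "writes (TCaseL e x T y) = writes T"
| "writes (TCaseR e x y T) = writes T"

fun outcome_of :: "trace \<Rightarrow> outcome" where
  "outcome_of (THole k L) = k"
| "outcome_of (TReturn e) = Val"
| "outcome_of (TTryS T) = Val"
| "outcome_of (TRef l e) = Val"
| "outcome_of (TAssign e1 l e2) = Val"
| "outcome_of (TDeref l e) = Val"
| "outcome_of (TLetF T) = Exn"
| "outcome_of (TRaise e) = Exn"
| "outcome_of (TLetS T1 x T2) = outcome_of T2"
| "outcome_of (TTryF T1 x T2) = outcome_of T2"
| "outcome_of (TApp e1 e2 f x T) = outcome_of T"
| "outcome_of (TCaseL e x T y) = outcome_of T"
| "outcome_of (TCaseR e x y T) = outcome_of T"

inductive trace_le :: "trace \<Rightarrow> trace \<Rightarrow> bool" where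
  hole: "writes T = L \<Longrightarrow> outcome_of T = k \<Longrightarrow> trace_le (THole k L) T"
| "expr_le e e' \<Longrightarrow> trace_le (TReturn e) (TReturn e')"
| "trace_le T T' \<Longrightarrow> trace_le (TLetF T) (TLetF T')"
| "trace_le T1 T1' \<Longrightarrow> trace_le T2 T2' \<Longrightarrow> trace_le (TLetS T1 x T2) (TLetS T1' x T2')"
| "expr_le e1 e1' \<Longrightarrow> expr_le e2 e2' \<Longrightarrow> trace_le T T' \<Longrightarrow>
     trace_le (TApp e1 e2 f x T) (TApp e1' e2' f x T')"
| "expr_le e e' \<Longrightarrow> trace_le T T' \<Longrightarrow> trace_le (TCaseL e x T y) (TCaseL e' x T' y)"
| "expr_le e e' \<Longrightarrow> trace_le T T' \<Longrightarrow> trace_le (TCaseR e x y T) (TCaseR e' x y T')"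
| "expr_le e e' \<Longrightarrow> trace_le (TRaise e) (TRaise e')"
| "trace_le T T' \<Longrightarrow> trace_le (TTryS T) (TTryS T')"
| "trace_le T1 T1' \<Longrightarrow> trace_le T2 T2' \<Longrightarrow> trace_le (TTryF T1 x T2) (TTryF T1' x T2')"
| "expr_le e e' \<Longrightarrow> trace_le (TRef l e) (TRef l e')"
| "expr_le e1 e1' \<Longrightarrow> expr_le e2 e2' \<Longrightarrow> trace_le (TAssign e1 l e2) (TAssign e1' l e2')"
| "expr_le e e' \<Longrightarrow> trace_le (TDeref l e) (TDeref l e')"

definition Prefix :: "trace \<Rightarrow> trace set" where
  "Prefix T = {T'. trace_le T' T}"

definition prefix_order :: "trace \<Rightarrow> trace gorder" where
  "prefix_order T = \<lparr>carrier = Prefix T, eq = (=), le = trace_le\<rparr>"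

end

theory Submission
  imports Defs
begin

text \<open>A prefix of a trace \<open>T\<close> arises from \<open>T\<close> by cutting subexpressions down to holes and
  subtraces down to the hole carrying their writes and outcome, so \<open>Prefix T\<close> is finite and has
  \<open>T\<close> as its top. Two prefixes of \<open>T\<close> have a meet, obtained by descending into both in parallel
  and cutting to a hole wherever they disagree. A finite partial order with a top element and
  binary meets is a complete lattice.\<close>

lemma (in lower_semilattice) complete_lattice_if_finite_with_top:
  assumes "finite (carrier L)" and "\<exists>g. greatest L g (carrier L)"
  shows "complete_lattice L"
  using assms by (intro complete_lattice_criterion1) (auto intro: finite_inf_greatest finite_subset)

inductive_simps expr_le_hole_iff [simp]: "expr_le e EHole"
inductive_simps comp_le_hole_iff [simp]: "comp_le M CHole"

lemma hole_expr_le [simp]: "expr_le EHole e" and hole_comp_le [simp]: "comp_le CHole M"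
  by (rule expr_le_comp_le.intros)+

inductive_simps expr_le_right_iff:
  "expr_le x (EVar v)" "expr_le x EUnit" "expr_le x (EInl e)" "expr_le x (EInr e)"
  "expr_le x (EPair e1 e2)" "expr_le x (EFst e)" "expr_le x (ESnd e)" "expr_le x (EFun f v M)"
inductive_simps comp_le_right_iff:
  "comp_le x (CReturn e)" "comp_le x (CLet v M1 M2)" "comp_le x (CApp e1 e2)"
  "comp_le x (CCase e v M1 w M2)" "comp_le x (CRaise e)" "comp_le x (CTry M1 v M2)"
  "comp_le x (CRef e)" "comp_le x (CAssign e1 e2)" "comp_le x (CDeref e)"
inductive_simps expr_le_left_iff:
  "expr_le (EVar v) x" "expr_le EUnit x" "expr_le (EInl e) x" "expr_le (EInr e) x"
  "expr_le (EPair e1 e2) x" "expr_le (EFst e) x" "expr_le (ESnd e) x" "expr_le (EFun f v M) x"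
inductive_simps comp_le_left_iff:
  "comp_le (CReturn e) x" "comp_le (CLet v M1 M2) x" "comp_le (CApp e1 e2) x"
  "comp_le (CCase e v M1 w M2) x" "comp_le (CRaise e) x" "comp_le (CTry M1 v M2) x"
  "comp_le (CRef e) x" "comp_le (CAssign e1 e2) x" "comp_le (CDeref e) x"

lemma expr_le_refl: "expr_le e e" and comp_le_refl: "comp_le M M"
  by (induct e and M) (auto simp: expr_le_right_iff comp_le_right_iff)

lemma expr_le_trans: "expr_le e1 e2 \<Longrightarrow> expr_le e2 e3 \<Longrightarrow> expr_le e1 e3"
  and comp_le_trans: "comp_le M1 M2 \<Longrightarrow> comp_le M2 M3 \<Longrightarrow> comp_le M1 M3"
  by (induct e1 e2 and M1 M2 arbitrary: e3 and M3 rule: expr_le_comp_le.inducts)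
     (auto simp: expr_le_left_iff comp_le_left_iff)

lemma expr_le_antisym: "expr_le e1 e2 \<Longrightarrow> expr_le e2 e1 \<Longrightarrow> e1 = e2"
  and comp_le_antisym: "comp_le M1 M2 \<Longrightarrow> comp_le M2 M1 \<Longrightarrow> M1 = M2"
  by (induct e1 e2 and M1 M2 rule: expr_le_comp_le.inducts)
     (auto simp: expr_le_left_iff comp_le_left_iff)

primrec emeet :: "expr \<Rightarrow> expr \<Rightarrow> expr" and cmeet :: "comp \<Rightarrow> comp \<Rightarrow> comp" where
  "emeet EHole e = EHole"
| "emeet (EVar v) e = (if e = EVar v then EVar v else EHole)"
| "emeet EUnit e = (if e = EUnit then EUnit else EHole)"
| "emeet (EInl a) e = (case e of EInl b \<Rightarrow> EInl (emeet a b) | _ \<Rightarrow> EHole)"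
| "emeet (EInr a) e = (case e of EInr b \<Rightarrow> EInr (emeet a b) | _ \<Rightarrow> EHole)"
| "emeet (EPair a1 a2) e =
     (case e of EPair b1 b2 \<Rightarrow> EPair (emeet a1 b1) (emeet a2 b2) | _ \<Rightarrow> EHole)"
| "emeet (EFst a) e = (case e of EFst b \<Rightarrow> EFst (emeet a b) | _ \<Rightarrow> EHole)"
| "emeet (ESnd a) e = (case e of ESnd b \<Rightarrow> ESnd (emeet a b) | _ \<Rightarrow> EHole)"
| "emeet (EFun f v M) e =
     (case e of EFun g w N \<Rightarrow> if g = f \<and> w = v then EFun f v (cmeet M N) else EHole
      | _ \<Rightarrow> EHole)"
| "cmeet CHole M = CHole"
| "cmeet (CReturn a) M = (case M of CReturn b \<Rightarrow> CReturn (emeet a b) | _ \<Rightarrow> CHole)"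
| "cmeet (CLet v A1 A2) M =
     (case M of CLet w B1 B2 \<Rightarrow> if w = v then CLet v (cmeet A1 B1) (cmeet A2 B2) else CHole
      | _ \<Rightarrow> CHole)"
| "cmeet (CApp a1 a2) M =
     (case M of CApp b1 b2 \<Rightarrow> CApp (emeet a1 b1) (emeet a2 b2) | _ \<Rightarrow> CHole)"
| "cmeet (CCase a v A1 w A2) M =
     (case M of CCase b v' B1 w' B2 \<Rightarrow>
        if v' = v \<and> w' = w then CCase (emeet a b) v (cmeet A1 B1) w (cmeet A2 B2) else CHole
      | _ \<Rightarrow> CHole)"
| "cmeet (CRaise a) M = (case M of CRaise b \<Rightarrow> CRaise (emeet a b) | _ \<Rightarrow> CHole)"
| "cmeet (CTry A1 v A2) M =
     (case M of CTry B1 w B2 \<Rightarrow> if w = v then CTry (cmeet A1 B1) v (cmeet A2 B2) else CHole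
      | _ \<Rightarrow> CHole)"
| "cmeet (CRef a) M = (case M of CRef b \<Rightarrow> CRef (emeet a b) | _ \<Rightarrow> CHole)"
| "cmeet (CAssign a1 a2) M =
     (case M of CAssign b1 b2 \<Rightarrow> CAssign (emeet a1 b1) (emeet a2 b2) | _ \<Rightarrow> CHole)"
| "cmeet (CDeref a) M = (case M of CDeref b \<Rightarrow> CDeref (emeet a b) | _ \<Rightarrow> CHole)"

lemma expr_le_emeet_iff: "expr_le c (emeet a b) \<longleftrightarrow> expr_le c a \<and> expr_le c b"
  and comp_le_cmeet_iff: "comp_le C (cmeet A B) \<longleftrightarrow> comp_le C A \<and> comp_le C B"
  by (induct a and A arbitrary: b c and B C)
     (auto simp: expr_le_right_iff comp_le_right_iff expr_le_left_iff comp_le_left_iff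
       split: expr.split comp.split)

lemma emeet_lower: "expr_le (emeet a b) a" "expr_le (emeet a b) b"
  using expr_le_emeet_iff expr_le_refl by blast+

lemma finite_image_set3:
  "finite {x. P x} \<Longrightarrow> finite {y. Q y} \<Longrightarrow> finite {z. R z} \<Longrightarrow>
    finite {f x y z |x y z. P x \<and> Q y \<and> R z}"
  using finite_image_set2[where f = "\<lambda>x (y, z). f x y z" and Q = "\<lambda>(y, z). Q y \<and> R z"]
    finite_image_set2[where f = Pair and P = Q and Q = R]
  by (simp add: split_def)

lemma finite_expr_prefixes: "finite {e'. expr_le e' e}"
  and finite_comp_prefixes: "finite {M'. comp_le M' M}"
  by (induct e and M)
     (simp_all add: expr_le_right_iff comp_le_right_iff Collect_disj_eq finite_image_set2 finite_image_set3)

lemma hole_trace_le_iff [simp]: "trace_le (THole k L) T \<longleftrightarrow> writes T = L \<and> outcome_of T = k"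
  by (auto intro: trace_le.hole elim: trace_le.cases)

inductive_simps trace_le_hole_iff [simp]: "trace_le T (THole k L)"

inductive_simps trace_le_right_iff:
  "trace_le x (TReturn e)" "trace_le x (TLetF T)" "trace_le x (TLetS T1 v T2)"
  "trace_le x (TApp e1 e2 f v T)" "trace_le x (TCaseL e v T w)" "trace_le x (TCaseR e v w T)"
  "trace_le x (TRaise e)" "trace_le x (TTryS T)" "trace_le x (TTryF T1 v T2)"
  "trace_le x (TRef l e)" "trace_le x (TAssign e1 l e2)" "trace_le x (TDeref l e)"
inductive_simps trace_le_left_iff:
  "trace_le (TReturn e) x" "trace_le (TLetF T) x" "trace_le (TLetS T1 v T2) x"
  "trace_le (TApp e1 e2 f v T) x" "trace_le (TCaseL e v T w) x" "trace_le (TCaseR e v w T) x"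
  "trace_le (TRaise e) x" "trace_le (TTryS T) x" "trace_le (TTryF T1 v T2) x"
  "trace_le (TRef l e) x" "trace_le (TAssign e1 l e2) x" "trace_le (TDeref l e) x"

lemma trace_le_writes: "trace_le T T' \<Longrightarrow> writes T = writes T'"
  and trace_le_outcome: "trace_le T T' \<Longrightarrow> outcome_of T = outcome_of T'"
  by (induct rule: trace_le.induct) auto

lemma trace_le_refl: "trace_le T T"
  by (induct T) (auto simp: trace_le_right_iff expr_le_refl)

lemma trace_le_trans: "trace_le T1 T2 \<Longrightarrow> trace_le T2 T3 \<Longrightarrow> trace_le T1 T3"
  by (induct T1 T2 arbitrary: T3 rule: trace_le.induct)
     (auto simp: trace_le_left_iff trace_le_writes trace_le_outcome intro: expr_le_trans)

lemma trace_le_antisym: "trace_le T1 T2 \<Longrightarrow> trace_le T2 T1 \<Longrightarrow> T1 = T2"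
  by (induct rule: trace_le.induct) (auto simp: trace_le_left_iff expr_le_antisym)

text \<open>Meaningful for traces below a common bound: it forces their labels to agree, and wherever
  their head constructors differ one of them is a hole; the catch-all branches return the second
  argument, which is then that hole.\<close>

primrec tmeet :: "trace \<Rightarrow> trace \<Rightarrow> trace" where
  "tmeet (THole k L) T = THole k L"
| "tmeet (TReturn a) T = (case T of TReturn b \<Rightarrow> TReturn (emeet a b) | _ \<Rightarrow> T)"
| "tmeet (TLetF A) T = (case T of TLetF B \<Rightarrow> TLetF (tmeet A B) | _ \<Rightarrow> T)"
| "tmeet (TLetS A1 x A2) T =
     (case T of TLetS B1 _ B2 \<Rightarrow> TLetS (tmeet A1 B1) x (tmeet A2 B2) | _ \<Rightarrow> T)"
| "tmeet (TApp a1 a2 f x A) T =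
     (case T of TApp b1 b2 _ _ B \<Rightarrow> TApp (emeet a1 b1) (emeet a2 b2) f x (tmeet A B) | _ \<Rightarrow> T)"
| "tmeet (TCaseL a x A y) T =
     (case T of TCaseL b _ B _ \<Rightarrow> TCaseL (emeet a b) x (tmeet A B) y | _ \<Rightarrow> T)"
| "tmeet (TCaseR a x y A) T =
     (case T of TCaseR b _ _ B \<Rightarrow> TCaseR (emeet a b) x y (tmeet A B) | _ \<Rightarrow> T)"
| "tmeet (TRaise a) T = (case T of TRaise b \<Rightarrow> TRaise (emeet a b) | _ \<Rightarrow> T)"
| "tmeet (TTryS A) T = (case T of TTryS B \<Rightarrow> TTryS (tmeet A B) | _ \<Rightarrow> T)"
| "tmeet (TTryF A1 x A2) T =
     (case T of TTryF B1 _ B2 \<Rightarrow> TTryF (tmeet A1 B1) x (tmeet A2 B2) | _ \<Rightarrow> T)"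
| "tmeet (TRef l a) T = (case T of TRef _ b \<Rightarrow> TRef l (emeet a b) | _ \<Rightarrow> T)"
| "tmeet (TAssign a1 l a2) T =
     (case T of TAssign b1 _ b2 \<Rightarrow> TAssign (emeet a1 b1) l (emeet a2 b2) | _ \<Rightarrow> T)"
| "tmeet (TDeref l a) T = (case T of TDeref _ b \<Rightarrow> TDeref l (emeet a b) | _ \<Rightarrow> T)"

lemma tmeet_lower:
  assumes "trace_le A U" and "trace_le B U"
  shows "trace_le (tmeet A B) A" and "trace_le (tmeet A B) B"
  using assms
  by (induct A U arbitrary: B rule: trace_le.induct)
     (auto simp: trace_le_right_iff trace_le_refl trace_le_writes trace_le_outcome emeet_lower)

lemma writes_tmeet: "trace_le A U \<Longrightarrow> trace_le B U \<Longrightarrow> writes (tmeet A B) = writes A"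
  and outcome_of_tmeet: "trace_le A U \<Longrightarrow> trace_le B U \<Longrightarrow> outcome_of (tmeet A B) = outcome_of A"
  using tmeet_lower trace_le_writes trace_le_outcome by blast+

lemma tmeet_greatest:
  assumes "trace_le A U" and "trace_le B U" and "trace_le C A" and "trace_le C B"
  shows "trace_le C (tmeet A B)"
  using assms
  by (induct A U arbitrary: B C rule: trace_le.induct)
     (auto simp: trace_le_right_iff writes_tmeet outcome_of_tmeet expr_le_emeet_iff)

lemma finite_trace_prefixes: "finite {T'. trace_le T' T}"
  by (induct T)
     (simp_all add: trace_le_right_iff Collect_disj_eq finite_expr_prefixes finite_image_set2
       finite_image_set3)

lemma partial_order_prefix_order: "partial_order (prefix_order T)"
  by unfold_locales
     (auto simp: prefix_order_def intro: trace_le_refl trace_le_trans trace_le_antisym)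

lemma lower_semilattice_prefix_order: "lower_semilattice (prefix_order T)"
proof (intro lower_semilattice.intro partial_order_prefix_order lower_semilattice_axioms.intro)
  fix A B assume "A \<in> carrier (prefix_order T)" and "B \<in> carrier (prefix_order T)"
  then have A: "trace_le A T" and B: "trace_le B T"
    by (simp_all add: prefix_order_def Prefix_def)
  have "trace_le (tmeet A B) A" and "trace_le (tmeet A B) B"
    by (rule tmeet_lower[OF A B])+
  then show "\<exists>M. greatest (prefix_order T) M (Lower (prefix_order T) {A, B})"
    using A B trace_le_trans[OF _ A] tmeet_greatest[OF A B]
    by (intro exI[of _ "tmeet A B"]) (auto simp: greatest_def Lower_def prefix_order_def Prefix_def)
qed

theorem lemma4p1:
  shows "complete_lattice (prefix_order T)"
proof (rule lower_semilattice.complete_lattice_if_finite_with_top[OF lower_semilattice_prefix_order])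
  show "finite (carrier (prefix_order T))"
    using finite_trace_prefixes by (simp add: prefix_order_def Prefix_def)
  show "\<exists>g. greatest (prefix_order T) g (carrier (prefix_order T))"
    by (auto simp: greatest_def prefix_order_def Prefix_def intro: trace_le_refl)
qed

end
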